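(* Consider the mechanism $\mathcal{M}_{sCA}$ for the $s$-CA problem, run under best-response dynamics with random player order in which every agent starts with the empty declaration, an agent chosen for update who cannot improve his utility keeps his previous declaration, and agents play undominated strategies (single-minded declarations $(S_i,t_i(S_i))$). Then at every step of the dynamics the submitted declaration profile is separated.
   Context: $s$-CA problem: $n$ agents, a set $M$ of $m$ items; an allocation is feasible if the allocated sets are pairwise disjoint and each has at most $s$ items. Agent $i$ has a private monotone valuation $t_i$ with $t_i(\emptyset)=0$. A single-minded declaration $(S,x)$ assigns $x$ to supersets of $S$ and $0$ otherwise. Mechanism $\mathcal{M}_{sCA}$: (1) replace each declaration $d_i$ by $(S_i,d_i(S_i))$ with $S_i\in\arg\max_S d_i(S)$ (ties to smaller sets); (2) run the greedy algorithm $\mathcal{A}_{sCA}$, which considers the declared sets in decreasing order of declared value and allocates a set of size at most $s$ to its bidder if it is disjoint from all previously allocated sets, obtaining tentative sets $T_1,\dots,T_n$; (3) for each $i$ with $T_i\ne\emptyset$, let $p_i=\sum_{j\ne i:\,S_j\cap T_i\ne\emptyset}d_j(S_j)$, and if $d_i(T_i)\le p_i$ set $T_i=\emptyset$; (4) allocate $T_1,\dots,T_n$ and charge each winner the critical price under this mechanism, i.e. the infimum value he could declare for his set and still receive it. Utility = true value minus payment. For a profile $\mathbf{d}$ of single-minded declarations $(S_j,d_j(S_j))$ and a set $T$, $R_i(\mathbf{d},T)=\{j\ne i: S_j\cap T\ne\emptyset\}$ and $Q_i(\mathbf{d},T)=\{j\in R_i(\mathbf{d},T): d_j(S_j)<t_i(T)\}$.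 $\mathbf{d}$ is separated for agent $i$ if $\sum_{j\in Q_i(\mathbf{d},S_i)}d_j(S_j)\le d_i(S_i)$, and separated if it is separated for every agent. Best-response dynamics with random player order: at each step one uniformly random agent may switch to a utility-maximizing declaration given the others' current declarations. *)

theory Defs
  imports Complex_Main "HOL-Library.Product_Lexorder"
begin

text \<open>A single-minded declaration (S, x): value x on supersets of S, 0 otherwise.
  Agents are 0..<n; a profile maps agents to declarations.\<close>

type_synonym 'm decl = "'m set \<times> real"
type_synonym 'm profile = "nat \<Rightarrow> 'm decl"

definition empty_decl :: "'m decl" where
  "empty_decl = ({}, 0)"

text \<open>Step (1): the argmax set of (S,x), ties broken towards smaller sets
  (for x > 0 this is S, for x = 0 every set attains the max and the smallest is the empty set).\<close>
definition eff :: "'m decl \<Rightarrow> 'm set" where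
  "eff d = (if snd d > 0 then fst d else {})"

definition greedy_order :: "nat \<Rightarrow> 'm profile \<Rightarrow> nat list" where
  "greedy_order n d = sort_key (\<lambda>j. (- snd (d j), j)) [0..<n]"

definition greedy_step :: "nat \<Rightarrow> 'm profile \<Rightarrow> nat \<Rightarrow> nat set \<Rightarrow> nat set" where
  "greedy_step s d j W =
     (if card (eff (d j)) \<le> s \<and> (\<forall>w\<in>W. eff (d w) \<inter> eff (d j) = {}) then insert j W else W)"

definition greedy_winners :: "nat \<Rightarrow> nat \<Rightarrow> 'm profile \<Rightarrow> nat set" where
  "greedy_winners n s d = fold (greedy_step s d) (greedy_order n d) {}"

definition tentative :: "nat \<Rightarrow> nat \<Rightarrow> 'm profile \<Rightarrow> nat \<Rightarrow> 'm set" where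
  "tentative n s d i = (if i \<in> greedy_winners n s d then eff (d i) else {})"

definition threshold :: "nat \<Rightarrow> nat \<Rightarrow> 'm profile \<Rightarrow> nat \<Rightarrow> real" where
  "threshold n s d i =
     (\<Sum>j\<in>{j\<in>{0..<n}. j \<noteq> i \<and> eff (d j) \<inter> tentative n s d i \<noteq> {}}. snd (d j))"

text \<open>Agent i receives a (non-empty) set: T_i \<noteq> {} and d_i(T_i) > p_i
  (note d_i(T_i) = x_i since T_i = S_i).\<close>
definition wins :: "nat \<Rightarrow> nat \<Rightarrow> 'm profile \<Rightarrow> nat \<Rightarrow> bool" where
  "wins n s d i = (tentative n s d i \<noteq> {} \<and> \<not> snd (d i) \<le> threshold n s d i)"

definition alloc :: "nat \<Rightarrow> nat \<Rightarrow> 'm profile \<Rightarrow> nat \<Rightarrow> 'm set" where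
  "alloc n s d i = (if wins n s d i then tentative n s d i else {})"

definition payment :: "nat \<Rightarrow> nat \<Rightarrow> 'm profile \<Rightarrow> nat \<Rightarrow> real" where
  "payment n s d i =
     (if wins n s d i then Inf {y. 0 \<le> y \<and> wins n s (d(i := (fst (d i), y))) i} else 0)"

definition utility ::
  "(nat \<Rightarrow> 'm set \<Rightarrow> real) \<Rightarrow> nat \<Rightarrow> nat \<Rightarrow> 'm profile \<Rightarrow> nat \<Rightarrow> real" where
  "utility t n s d i = t i (alloc n s d i) - payment n s d i"

definition R_set :: "nat \<Rightarrow> 'm profile \<Rightarrow> nat \<Rightarrow> 'm set \<Rightarrow> nat set" where
  "R_set n d i T = {j\<in>{0..<n}. j \<noteq> i \<and> fst (d j) \<inter> T \<noteq> {}}"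

definition Q_set ::
  "(nat \<Rightarrow> 'm set \<Rightarrow> real) \<Rightarrow> nat \<Rightarrow> 'm profile \<Rightarrow> nat \<Rightarrow> 'm set \<Rightarrow> nat set" where
  "Q_set t n d i T = {j\<in>R_set n d i T. snd (d j) < t i T}"

definition separated_for ::
  "(nat \<Rightarrow> 'm set \<Rightarrow> real) \<Rightarrow> nat \<Rightarrow> 'm profile \<Rightarrow> nat \<Rightarrow> bool" where
  "separated_for t n d i = ((\<Sum>j\<in>Q_set t n d i (fst (d i)). snd (d j)) \<le> snd (d i))"

definition separated :: "(nat \<Rightarrow> 'm set \<Rightarrow> real) \<Rightarrow> nat \<Rightarrow> 'm profile \<Rightarrow> bool" where
  "separated t n d = (\<forall>i<n. separated_for t n d i)"

definition undominated :: "'m set \<Rightarrow> (nat \<Rightarrow> 'm set \<Rightarrow> real) \<Rightarrow> nat \<Rightarrow> 'm decl set" where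
  "undominated M t i = {(S, t i S) | S. S \<subseteq> M}"

definition br_step ::
  "'m set \<Rightarrow> (nat \<Rightarrow> 'm set \<Rightarrow> real) \<Rightarrow> nat \<Rightarrow> nat \<Rightarrow> 'm profile \<Rightarrow> nat \<Rightarrow> 'm profile \<Rightarrow> bool" where
  "br_step M t n s d i d' =
     ((\<forall>j. j \<noteq> i \<longrightarrow> d' j = d j) \<and>
      (if \<exists>c\<in>undominated M t i. utility t n s (d(i := c)) i > utility t n s d i
       then d' i \<in> undominated M t i \<and>
            (\<forall>c\<in>undominated M t i. utility t n s (d(i := c)) i \<le> utility t n s d' i)
       else d' i = d i))"

end

theory Submission
  imports Defs
begin

text \<open>Invariant: every declaration is undominated (so all declared values are nonnegative) and
  the profile is separated. Only the agent i who moves can break it. He moves only to strictly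
  increase a utility that was nonnegative, so afterwards he wins, i.e. his value exceeds the sum
  of the positive values overlapping his set; this makes him separated. For any other agent k,
  the agent i cannot enter Q_k: if i's value were below t_k(S_k) = x_k while S_i meets S_k,
  then x_k would be part of i's threshold and exceed i's value. So Q_k only shrinks.\<close>

definition undominated_profile ::
  "'m set \<Rightarrow> (nat \<Rightarrow> 'm set \<Rightarrow> real) \<Rightarrow> nat \<Rightarrow> 'm profile \<Rightarrow> bool" where
  "undominated_profile M t n d = (\<forall>j<n. d j \<in> undominated M t j)"

lemma undominated_profile_nonneg:
  assumes "undominated_profile M t n d" "\<forall>i<n. t i {} = 0"
    "\<forall>i<n. \<forall>A B. A \<subseteq> B \<longrightarrow> B \<subseteq> M \<longrightarrow> t i A \<le> t i B" "j < n"
  shows "0 \<le> snd (d j)"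
proof -
  obtain S where "S \<subseteq> M" "d j = (S, t j S)"
    using assms(1,4) unfolding undominated_profile_def undominated_def by blast
  then show ?thesis using assms(2,3,4) by (metis empty_subsetI snd_conv)
qed

lemma tentative_nonempty_D:
  assumes "tentative n s d i \<noteq> {}"
  shows "0 < snd (d i)" "tentative n s d i = fst (d i)"
  using assms unfolding tentative_def eff_def by (auto split: if_splits)

lemma le_threshold:
  assumes nonneg: "\<forall>j<n. 0 \<le> snd (d j)" and "k < n" "k \<noteq> i"
    and "fst (d k) \<inter> tentative n s d i \<noteq> {}" "0 < snd (d k)"
  shows "snd (d k) \<le> threshold n s d i"
proof -
  have "eff (d k) \<inter> tentative n s d i \<noteq> {}" using assms unfolding eff_def by auto
  then show ?thesis unfolding threshold_def
    by (intro member_le_sum) (use assms in auto)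
qed

text \<open>The declared value itself is among the admissible values, so the critical price
  is at most the true value of the allocated set.\<close>
lemma utility_nonneg:
  assumes und: "undominated_profile M t n d" and t0: "\<forall>i<n. t i {} = 0"
    and mono: "\<forall>i<n. \<forall>A B. A \<subseteq> B \<longrightarrow> B \<subseteq> M \<longrightarrow> t i A \<le> t i B" and i: "i < n"
  shows "0 \<le> utility t n s d i"
proof (cases "wins n s d i")
  case False
  then show ?thesis using t0 i unfolding utility_def alloc_def payment_def by simp
next
  case True
  obtain S where S: "d i = (S, t i S)"
    using und i unfolding undominated_profile_def undominated_def by blast
  have "alloc n s d i = S"
    using True tentative_nonempty_D(2)[of n s d i] S unfolding alloc_def wins_def by simp
  have "snd (d i) \<in> {y. 0 \<le> y \<and> wins n s (d(i := (fst (d i), y))) i}"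
    using undominated_profile_nonneg[OF und t0 mono i] True by simp
  then have "Inf {y. 0 \<le> y \<and> wins n s (d(i := (fst (d i), y))) i} \<le> snd (d i)"
    by (rule cInf_lower) (auto intro: bdd_belowI[where m=0])
  then have "payment n s d i \<le> t i S" using True S unfolding payment_def by simp
  then show ?thesis unfolding utility_def \<open>alloc n s d i = S\<close> by simp
qed

lemma wins_if_utility_pos:
  assumes "0 < utility t n s d i" "t i {} = 0"
  shows "wins n s d i"
  using assms unfolding utility_def alloc_def payment_def by (auto split: if_splits)

lemma br_step_undominated_profile:
  assumes "undominated_profile M t n d" "br_step M t n s d i d'"
  shows "undominated_profile M t n d'"
  using assms unfolding undominated_profile_def br_step_def by (metis (full_types))

lemma br_step_unchanged_or_wins:
  assumes und: "undominated_profile M t n d" and t0: "\<forall>i<n. t i {} = 0"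
    and mono: "\<forall>i<n. \<forall>A B. A \<subseteq> B \<longrightarrow> B \<subseteq> M \<longrightarrow> t i A \<le> t i B" and i: "i < n"
    and br: "br_step M t n s d i d'"
  shows "d' = d \<or> wins n s d' i"
proof (cases "\<exists>c\<in>undominated M t i. utility t n s (d(i := c)) i > utility t n s d i")
  case False
  then show ?thesis using br unfolding br_step_def by (auto simp: fun_eq_iff)
next
  case True
  then obtain c where c: "c \<in> undominated M t i" "utility t n s (d(i := c)) i > utility t n s d i"
    by blast
  have "utility t n s (d(i := c)) i \<le> utility t n s d' i"
    using br True c(1) unfolding br_step_def by auto
  with c(2) utility_nonneg[OF und t0 mono i, of s] have "0 < utility t n s d' i" by linarith
  then show ?thesis using wins_if_utility_pos t0 i by blast
qed

lemma separated_for_winner: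
  assumes nonneg: "\<forall>j<n. 0 \<le> snd (d j)" and "wins n s d i"
  shows "separated_for t n d i"
proof -
  let ?Q = "Q_set t n d i (fst (d i))"
  have T: "tentative n s d i = fst (d i)"
    using \<open>wins n s d i\<close> tentative_nonempty_D(2)[of n s d i] unfolding wins_def by blast
  have "(\<Sum>j\<in>?Q. snd (d j)) = (\<Sum>j\<in>{j \<in> ?Q. 0 < snd (d j)}. snd (d j))"
    by (rule sum.mono_neutral_right) (use nonneg in \<open>auto simp: Q_set_def R_set_def\<close>)
  also have "\<dots> \<le> threshold n s d i" unfolding threshold_def
    by (rule sum_mono2) (auto simp: Q_set_def R_set_def eff_def T)
  also have "\<dots> < snd (d i)" using \<open>wins n s d i\<close> unfolding wins_def by simp
  finally show ?thesis unfolding separated_for_def by simp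
qed

lemma separated_for_update_by_winner:
  assumes und: "undominated_profile M t n d'" and t0: "\<forall>i<n. t i {} = 0"
    and mono: "\<forall>i<n. \<forall>A B. A \<subseteq> B \<longrightarrow> B \<subseteq> M \<longrightarrow> t i A \<le> t i B"
    and others: "\<forall>j. j \<noteq> i \<longrightarrow> d' j = d j" and i: "i < n" and win: "wins n s d' i"
    and k: "k < n" "k \<noteq> i" and sep: "separated_for t n d k"
    and nonneg: "\<forall>j<n. 0 \<le> snd (d j)"
  shows "separated_for t n d' k"
proof -
  let ?Q' = "Q_set t n d' k (fst (d' k))"
  let ?Q = "Q_set t n d k (fst (d k))"
  have nonneg': "\<forall>j<n. 0 \<le> snd (d' j)" using undominated_profile_nonneg[OF und t0 mono] by blast
  have "i \<notin> ?Q'"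
  proof
    assume "i \<in> ?Q'"
    then have overlap: "fst (d' k) \<inter> fst (d' i) \<noteq> {}"
      and below: "snd (d' i) < t k (fst (d' k))"
      unfolding Q_set_def R_set_def by auto
    have "snd (d' k) = t k (fst (d' k))"
      using und k unfolding undominated_profile_def undominated_def by auto
    with below nonneg' i have pos: "0 < snd (d' k)" and less: "snd (d' i) < snd (d' k)" by auto
    have "snd (d' k) \<le> threshold n s d' i"
      using le_threshold[OF nonneg' k] overlap pos win tentative_nonempty_D(2)
      unfolding wins_def by metis
    with less win show False unfolding wins_def by simp
  qed
  then have "?Q' \<subseteq> ?Q" using others k(2) unfolding Q_set_def R_set_def by fastforce
  have "(\<Sum>j\<in>?Q'. snd (d' j)) = (\<Sum>j\<in>?Q'. snd (d j))"
    by (rule sum.cong) (use \<open>i \<notin> ?Q'\<close> others in auto)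
  also have "\<dots> \<le> (\<Sum>j\<in>?Q. snd (d j))"
    by (rule sum_mono2) (use \<open>?Q' \<subseteq> ?Q\<close> nonneg in \<open>auto simp: Q_set_def R_set_def\<close>)
  also have "\<dots> \<le> snd (d' k)" using sep others k(2) unfolding separated_for_def by simp
  finally show ?thesis unfolding separated_for_def using others k(2) by simp
qed

lemma br_step_preserves_separated:
  assumes und: "undominated_profile M t n d" and t0: "\<forall>i<n. t i {} = 0"
    and mono: "\<forall>i<n. \<forall>A B. A \<subseteq> B \<longrightarrow> B \<subseteq> M \<longrightarrow> t i A \<le> t i B" and i: "i < n"
    and sep: "separated t n d" and br: "br_step M t n s d i d'"
  shows "separated t n d'"
  using br_step_unchanged_or_wins[OF und t0 mono i br]
proof
  assume win: "wins n s d' i"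
  have und': "undominated_profile M t n d'" using br_step_undominated_profile[OF und br] .
  have others: "\<forall>j. j \<noteq> i \<longrightarrow> d' j = d j" using br unfolding br_step_def by simp
  show ?thesis unfolding separated_def
  proof (intro allI impI)
    fix k assume "k < n"
    show "separated_for t n d' k"
    proof (cases "k = i")
      case True
      then show ?thesis
        using separated_for_winner undominated_profile_nonneg[OF und' t0 mono] win by blast
    next
      case False
      then show ?thesis
        using separated_for_update_by_winner[OF und' t0 mono others i win \<open>k < n\<close>]
          sep \<open>k < n\<close> undominated_profile_nonneg[OF und t0 mono]
        unfolding separated_def by blast
    qed
  qed
qed (use sep in simp)

theorem lemma4p3:
  fixes M :: "'m set" and t :: "nat \<Rightarrow> 'm set \<Rightarrow> real" and n s :: nat
    and ord :: "nat \<Rightarrow> nat" and d :: "nat \<Rightarrow> 'm profile"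
  assumes "finite M" and "1 \<le> s"
    and "\<forall>i<n. t i {} = 0"
    and "\<forall>i<n. \<forall>A B. A \<subseteq> B \<longrightarrow> B \<subseteq> M \<longrightarrow> t i A \<le> t i B"
    and "\<forall>k. ord k < n"
    and "\<forall>i. d 0 i = empty_decl"
    and "\<forall>k. br_step M t n s (d k) (ord k) (d (Suc k))"
  shows "\<forall>k. separated t n (d k)"
proof
  fix k
  have "undominated_profile M t n (d k) \<and> separated t n (d k)"
  proof (induction k)
    case 0
    show ?case using assms(3,6)
      unfolding undominated_profile_def undominated_def separated_def separated_for_def
        empty_decl_def Q_set_def R_set_def by force
  next
    case (Suc k)
    then show ?case
      using br_step_undominated_profile br_step_preserves_separated[OF _ assms(3,4)] assms(5,7)
      by blast
  qed
  then show "separated t n (d k)" by simp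
qed

end
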